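(* Let $F$ be any subfield of $\mathbb{R}$ and $r\in F$. Then (1) $T[F]$ proves $\forall x\,(x\le r\rightarrow x^2-2x+1\ge0)$ if and only if $r<1$; and (2) $T[F]$ proves $\forall x\,(x\ge r\rightarrow x^2-2x+1\ge0)$ if and only if $r>1$.
   Context: For $a\in F$, $f_a$ is a unary function symbol interpreted as $f_a(x)=ax$; a constant $c\in F$ is denoted by the term $f_c(1)$. $x^2$ denotes $x\times x$ and $2x$ denotes $f_2(x)$. $T_{\mathrm{add}}[F]$ is the set of sentences true in $(\mathbb{R},0,1,+,-,<,(f_a)_{a\in F})$, $T_{\mathrm{mult}}[F]$ the set of sentences true in $(\mathbb{R},0,1,\times,\div,<,(f_a)_{a\in F})$ with $x\div0=0$, and $T[F]=T_{\mathrm{add}}[F]\cup T_{\mathrm{mult}}[F]$, a theory in the union of the two languages. *)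

theory Defs
  imports Complex_Main
begin

datatype tm =
    Var nat
  | Zero
  | One
  | Add tm tm
  | Sub tm tm
  | Mul tm tm
  | Dvd tm tm
  | Sc real tm

datatype fm =
    Eq tm tm
  | Less tm tm
  | Bot
  | Neg fm
  | Conj fm fm
  | Disj fm fm
  | Imp fm fm
  | All nat fm
  | Ex nat fm

datatype lang = LAdd | LMult | LBoth

fun tm_in :: "lang \<Rightarrow> real set \<Rightarrow> tm \<Rightarrow> bool" where
  "tm_in L F (Var n) = True"
| "tm_in L F Zero = True"
| "tm_in L F One = True"
| "tm_in L F (Add s t) = (L \<noteq> LMult \<and> tm_in L F s \<and> tm_in L F t)"
| "tm_in L F (Sub s t) = (L \<noteq> LMult \<and> tm_in L F s \<and> tm_in L F t)"
| "tm_in L F (Mul s t) = (L \<noteq> LAdd \<and> tm_in L F s \<and> tm_in L F t)"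
| "tm_in L F (Dvd s t) = (L \<noteq> LAdd \<and> tm_in L F s \<and> tm_in L F t)"
| "tm_in L F (Sc a t) = (a \<in> F \<and> tm_in L F t)"

fun fm_in :: "lang \<Rightarrow> real set \<Rightarrow> fm \<Rightarrow> bool" where
  "fm_in L F (Eq s t) = (tm_in L F s \<and> tm_in L F t)"
| "fm_in L F (Less s t) = (tm_in L F s \<and> tm_in L F t)"
| "fm_in L F Bot = True"
| "fm_in L F (Neg p) = fm_in L F p"
| "fm_in L F (Conj p q) = (fm_in L F p \<and> fm_in L F q)"
| "fm_in L F (Disj p q) = (fm_in L F p \<and> fm_in L F q)"
| "fm_in L F (Imp p q) = (fm_in L F p \<and> fm_in L F q)"
| "fm_in L F (All x p) = fm_in L F p"
| "fm_in L F (Ex x p) = fm_in L F p"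

fun tm_vars :: "tm \<Rightarrow> nat set" where
  "tm_vars (Var n) = {n}"
| "tm_vars Zero = {}"
| "tm_vars One = {}"
| "tm_vars (Add s t) = tm_vars s \<union> tm_vars t"
| "tm_vars (Sub s t) = tm_vars s \<union> tm_vars t"
| "tm_vars (Mul s t) = tm_vars s \<union> tm_vars t"
| "tm_vars (Dvd s t) = tm_vars s \<union> tm_vars t"
| "tm_vars (Sc a t) = tm_vars t"

fun free_vars :: "fm \<Rightarrow> nat set" where
  "free_vars (Eq s t) = tm_vars s \<union> tm_vars t"
| "free_vars (Less s t) = tm_vars s \<union> tm_vars t"
| "free_vars Bot = {}"
| "free_vars (Neg p) = free_vars p"
| "free_vars (Conj p q) = free_vars p \<union> free_vars q"
| "free_vars (Disj p q) = free_vars p \<union> free_vars q"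
| "free_vars (Imp p q) = free_vars p \<union> free_vars q"
| "free_vars (All x p) = free_vars p - {x}"
| "free_vars (Ex x p) = free_vars p - {x}"

definition sentence_in :: "lang \<Rightarrow> real set \<Rightarrow> fm \<Rightarrow> bool" where
  "sentence_in L F p \<longleftrightarrow> fm_in L F p \<and> free_vars p = {}"

record 'a struct =
  carrier :: "'a set"
  zero :: 'a
  one :: 'a
  plus :: "'a \<Rightarrow> 'a \<Rightarrow> 'a"
  minus :: "'a \<Rightarrow> 'a \<Rightarrow> 'a"
  times :: "'a \<Rightarrow> 'a \<Rightarrow> 'a"
  divide :: "'a \<Rightarrow> 'a \<Rightarrow> 'a"
  scal :: "real \<Rightarrow> 'a \<Rightarrow> 'a"
  less :: "'a \<Rightarrow> 'a \<Rightarrow> bool"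

fun tm_eval :: "'a struct \<Rightarrow> (nat \<Rightarrow> 'a) \<Rightarrow> tm \<Rightarrow> 'a" where
  "tm_eval M e (Var n) = e n"
| "tm_eval M e Zero = zero M"
| "tm_eval M e One = one M"
| "tm_eval M e (Add s t) = plus M (tm_eval M e s) (tm_eval M e t)"
| "tm_eval M e (Sub s t) = minus M (tm_eval M e s) (tm_eval M e t)"
| "tm_eval M e (Mul s t) = times M (tm_eval M e s) (tm_eval M e t)"
| "tm_eval M e (Dvd s t) = divide M (tm_eval M e s) (tm_eval M e t)"
| "tm_eval M e (Sc a t) = scal M a (tm_eval M e t)"

fun sat :: "'a struct \<Rightarrow> (nat \<Rightarrow> 'a) \<Rightarrow> fm \<Rightarrow> bool" where
  "sat M e (Eq s t) = (tm_eval M e s = tm_eval M e t)"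
| "sat M e (Less s t) = less M (tm_eval M e s) (tm_eval M e t)"
| "sat M e Bot = False"
| "sat M e (Neg p) = (\<not> sat M e p)"
| "sat M e (Conj p q) = (sat M e p \<and> sat M e q)"
| "sat M e (Disj p q) = (sat M e p \<or> sat M e q)"
| "sat M e (Imp p q) = (sat M e p \<longrightarrow> sat M e q)"
| "sat M e (All x p) = (\<forall>a\<in>carrier M. sat M (e(x := a)) p)"
| "sat M e (Ex x p) = (\<exists>a\<in>carrier M. sat M (e(x := a)) p)"

definition holds :: "'a struct \<Rightarrow> fm \<Rightarrow> bool" where
  "holds M p \<longleftrightarrow> (\<forall>e. (\<forall>n. e n \<in> carrier M) \<longrightarrow> sat M e p)"

definition is_struct :: "real set \<Rightarrow> 'a struct \<Rightarrow> bool" where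
  "is_struct F M \<longleftrightarrow> carrier M \<noteq> {} \<and>
     zero M \<in> carrier M \<and> one M \<in> carrier M \<and>
     (\<forall>x\<in>carrier M. \<forall>y\<in>carrier M.
        plus M x y \<in> carrier M \<and> minus M x y \<in> carrier M \<and>
        times M x y \<in> carrier M \<and> divide M x y \<in> carrier M) \<and>
     (\<forall>a\<in>F. \<forall>x\<in>carrier M. scal M a x \<in> carrier M)"

text \<open>The standard real structure (x / 0 = 0 is Isabelle's convention for division).
  The additive structure of the paper is its reduct to the additive language and the
  multiplicative structure its reduct to the multiplicative language.\<close>
definition Rstruct :: "real struct" where
  "Rstruct = \<lparr> carrier = UNIV, zero = 0, one = 1, plus = (+), minus = (-),
     times = (*), divide = (/), scal = (\<lambda>a x. a * x), less = (<) \<rparr>"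

definition T_add :: "real set \<Rightarrow> fm set" where
  "T_add F = {p. sentence_in LAdd F p \<and> holds Rstruct p}"

definition T_mult :: "real set \<Rightarrow> fm set" where
  "T_mult F = {p. sentence_in LMult F p \<and> holds Rstruct p}"

definition T :: "real set \<Rightarrow> fm set" where
  "T F = T_add F \<union> T_mult F"

text \<open>Provability from T[F], via the completeness theorem as semantic consequence.
  Models are taken with carrier a subset of a type of cardinality continuum (here real):
  the language over F has cardinality at most continuum, so by downward
  Loewenheim-Skolem every model of T[F] has an elementarily equivalent submodel of
  cardinality at most continuum, hence an isomorphic copy of this form.\<close>
definition proves :: "real set \<Rightarrow> fm \<Rightarrow> bool" where
  "proves F p \<longleftrightarrow> sentence_in LBoth F p \<and>
     (\<forall>M :: real struct. is_struct F M \<and> (\<forall>q\<in>T F. holds M q) \<longrightarrow> holds M p)"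

definition subfield_of_reals :: "real set \<Rightarrow> bool" where
  "subfield_of_reals F \<longleftrightarrow> 0 \<in> F \<and> 1 \<in> F \<and>
     (\<forall>x\<in>F. \<forall>y\<in>F. x + y \<in> F \<and> x - y \<in> F \<and> x * y \<in> F) \<and>
     (\<forall>x\<in>F. x \<noteq> 0 \<longrightarrow> inverse x \<in> F)"

definition cst :: "real \<Rightarrow> tm" where "cst c = Sc c One"

definition le_fm :: "tm \<Rightarrow> tm \<Rightarrow> fm" where "le_fm s t = Disj (Less s t) (Eq s t)"

text \<open>x^2 - 2x + 1, with x^2 = x \<times> x and 2x = f_2(x).\<close>
definition poly_tm :: "tm \<Rightarrow> tm" where
  "poly_tm x = Add (Sub (Mul x x) (Sc 2 x)) One"

definition phi_le :: "real \<Rightarrow> fm" where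
  "phi_le r = All 0 (Imp (le_fm (Var 0) (cst r)) (le_fm Zero (poly_tm (Var 0))))"

definition phi_ge :: "real \<Rightarrow> fm" where
  "phi_ge r = All 0 (Imp (le_fm (cst r) (Var 0)) (le_fm Zero (poly_tm (Var 0))))"

end

(*
  If r < 1, the sentence is derived from finitely many axioms of the two reducts. Below 0 the
  square is nonnegative. On an interval [c, 1/(2 - c)] with 0 <= c < 2, the multiplicative axiom
  "c <= x implies c x <= x * x" lets the additive axiom "c <= x <= 1/(2 - c) and c x <= y imply
  0 <= y - 2x + 1" take over the role of the square. The points k/(k+1) satisfy
  c_(k+1) = 1/(2 - c_k) and tend to 1, so finitely many intervals cover (-infinity, r]; for
  r > 1 the points (k+2)/(k+1) do the same from [2, infinity) downwards.

  Conversely, let *R be an ultrapower of the reals and rho an order automorphism of R fixing 0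
  and continuous there. The map sigma acting on the monad s (1 + eps) of every nonzero
  standard s by eps |-> rho eps, and as the identity elsewhere, is an order automorphism of *R
  commuting with all standard scalings. Replacing multiplication and division by their
  conjugates under sigma gives a structure whose additive reduct is that of *R and whose
  multiplicative reduct is isomorphic to that of *R, hence, by Los's theorem, a model of T[F].
  At x = 1 + u with u infinitesimal, x^2 - 2x + 1 there equals rho^-1((1 + rho u)^2 - 1) - 2u,
  which is negative for u < 0 when rho is the cube root and for u > 0 when rho is the cube.
*)
theory Submission
  imports Defs "HOL-Analysis.Analysis"
begin

section \<open>Isomorphic structures\<close>

definition struct_iso :: "lang \<Rightarrow> real set \<Rightarrow> 'a struct \<Rightarrow> 'b struct \<Rightarrow> ('a \<Rightarrow> 'b) \<Rightarrow> bool" where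
  "struct_iso L F M N h \<longleftrightarrow> bij_betw h (carrier M) (carrier N) \<and>
     h (zero M) = zero N \<and> h (one M) = one N \<and>
     (\<forall>x\<in>carrier M. \<forall>y\<in>carrier M.
        (L \<noteq> LMult \<longrightarrow> h (plus M x y) = plus N (h x) (h y) \<and> h (minus M x y) = minus N (h x) (h y)) \<and>
        (L \<noteq> LAdd \<longrightarrow> h (times M x y) = times N (h x) (h y) \<and> h (divide M x y) = divide N (h x) (h y)) \<and>
        (less N (h x) (h y) \<longleftrightarrow> less M x y)) \<and>
     (\<forall>a\<in>F. \<forall>x\<in>carrier M. h (scal M a x) = scal N a (h x))"

lemma tm_eval_iso:
  assumes "is_struct F M" "struct_iso L F M N h" "\<forall>n. e n \<in> carrier M" "tm_in L F t"
  shows "tm_eval M e t \<in> carrier M \<and> h (tm_eval M e t) = tm_eval N (\<lambda>n. h (e n)) t"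
  using assms(4) by (induction t) (use assms(1-3) in \<open>auto simp: is_struct_def struct_iso_def\<close>)

lemma sat_iso:
  assumes M: "is_struct F M" and h: "struct_iso L F M N h"
  shows "fm_in L F p \<Longrightarrow> \<forall>n. e n \<in> carrier M \<Longrightarrow> sat N (\<lambda>n. h (e n)) p \<longleftrightarrow> sat M e p"
proof (induction p arbitrary: e)
  case (Eq s t)
  have "inj_on h (carrier M)"
    using h by (simp add: struct_iso_def bij_betw_def)
  with Eq tm_eval_iso[OF M h, of e s] tm_eval_iso[OF M h, of e t] show ?case
    by (metis fm_in.simps(1) inj_on_eq_iff sat.simps(1))
next
  case (Less s t)
  have "less N (h x) (h y) \<longleftrightarrow> less M x y" if "x \<in> carrier M" "y \<in> carrier M" for x y
    using h that by (simp add: struct_iso_def)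
  moreover have "tm_eval N (\<lambda>n. h (e n)) u = h (tm_eval M e u)" "tm_eval M e u \<in> carrier M"
    if "tm_in L F u" for u
    using tm_eval_iso[OF M h Less.prems(2) that] by simp_all
  ultimately show ?case
    using Less.prems(1) by simp
next
  case (All x p)
  have "carrier N = h ` carrier M"
    using h by (simp add: struct_iso_def bij_betw_def)
  moreover have "(\<lambda>n. h (e n))(x := h b) = (\<lambda>n. h ((e(x := b)) n))" for b
    by auto
  ultimately show ?case
    using All by (simp add: fun_upd_def)
next
  case (Ex x p)
  have "carrier N = h ` carrier M"
    using h by (simp add: struct_iso_def bij_betw_def)
  moreover have "(\<lambda>n. h (e n))(x := h b) = (\<lambda>n. h ((e(x := b)) n))" for b
    by auto
  ultimately show ?case
    using Ex by (simp add: fun_upd_def)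
qed simp_all

lemma holds_iso_iff:
  assumes M: "is_struct F M" and h: "struct_iso L F M N h" and p: "fm_in L F p"
  shows "holds N p \<longleftrightarrow> holds M p"
proof
  assume HN: "holds N p"
  show "holds M p"
    unfolding holds_def
  proof (intro allI impI)
    fix e :: "nat \<Rightarrow> 'a" assume e: "\<forall>n. e n \<in> carrier M"
    then have "\<forall>n. h (e n) \<in> carrier N"
      using h by (auto simp: struct_iso_def bij_betw_def)
    then have "sat N (\<lambda>n. h (e n)) p"
      using HN by (simp add: holds_def)
    then show "sat M e p"
      using sat_iso[OF M h p e] by simp
  qed
next
  assume HM: "holds M p"
  show "holds N p"
    unfolding holds_def
  proof (intro allI impI)
    fix e :: "nat \<Rightarrow> 'b" assume e: "\<forall>n. e n \<in> carrier N"
    define e' where "e' n = inv_into (carrier M) h (e n)" for n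
    have "bij_betw h (carrier M) (carrier N)"
      using h by (simp add: struct_iso_def)
    then have "\<forall>n. e' n \<in> carrier M" and "(\<lambda>n. h (e' n)) = e"
      using e by (auto simp: e'_def bij_betw_def inv_into_into f_inv_into_f)
    then show "sat N e p"
      using sat_iso[OF M h p] HM by (metis holds_def)
  qed
qed

definition transport :: "('a \<Rightarrow> 'b) \<Rightarrow> 'a struct \<Rightarrow> 'b struct" where
  "transport h M = (let g = inv_into (carrier M) h in
     \<lparr>carrier = h ` carrier M, zero = h (zero M), one = h (one M),
      plus = \<lambda>x y. h (plus M (g x) (g y)), minus = \<lambda>x y. h (minus M (g x) (g y)),
      times = \<lambda>x y. h (times M (g x) (g y)), divide = \<lambda>x y. h (divide M (g x) (g y)),
      scal = \<lambda>a x. h (scal M a (g x)), less = \<lambda>x y. less M (g x) (g y)\<rparr>)"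

lemma struct_iso_transport: "inj_on h (carrier M) \<Longrightarrow> struct_iso L F M (transport h M) h"
  by (auto simp: struct_iso_def transport_def Let_def inj_on_imp_bij_betw)

lemma is_struct_transport: "inj_on h (carrier M) \<Longrightarrow> is_struct F M \<Longrightarrow> is_struct F (transport h M)"
  by (auto simp: is_struct_def transport_def Let_def inv_into_into)

definition model :: "real set \<Rightarrow> 'a struct \<Rightarrow> bool" where
  "model F M \<longleftrightarrow> is_struct F M \<and> (\<forall>q\<in>T F. holds M q)"

lemma model_if_reducts_iso:
  assumes M: "model F M" and N: "is_struct F N"
    and h: "struct_iso LAdd F M N h" and g: "struct_iso LMult F M N g"
  shows "model F N"
  unfolding model_def
proof (intro conjI ballI N)
  fix q assume "q \<in> T F"
  then have "holds M q" and "fm_in LAdd F q \<or> fm_in LMult F q"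
    using M by (auto simp: model_def T_def T_add_def T_mult_def sentence_in_def)
  then show "holds N q"
    using M holds_iso_iff[OF _ h] holds_iso_iff[OF _ g] by (auto simp: model_def)
qed

lemma not_proves_if_countermodel:
  fixes h :: "'a \<Rightarrow> real"
  assumes M: "model F M" and h: "inj_on h (carrier M)" and p: "\<not> holds M p"
  shows "\<not> proves F p"
proof
  assume pr: "proves F p"
  have iso: "struct_iso L F M (transport h M) h" for L
    by (rule struct_iso_transport[OF h])
  have S: "is_struct F M"
    using M by (simp add: model_def)
  have "model F (transport h M)"
    using model_if_reducts_iso[OF M is_struct_transport[OF h S] iso iso] .
  then have "holds (transport h M) p"
    using pr by (simp add: proves_def model_def)
  moreover have "fm_in LBoth F p"
    using pr by (simp add: proves_def sentence_in_def)
  ultimately show False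
    using holds_iso_iff[OF S iso] p by blast
qed

lemma inj_seq_to_real: "\<exists>\<iota> :: (nat \<Rightarrow> real) \<Rightarrow> real. inj \<iota>"
proof -
  obtain h :: "nat set \<Rightarrow> real" where h: "bij h"
    using nat_sets_eqpoll_reals by (auto simp: eqpoll_def)
  define \<iota> where "\<iota> f = h (prod_encode ` (SIGMA i:UNIV. inv h (f i)))" for f :: "nat \<Rightarrow> real"
  have "f = f'" if "\<iota> f = \<iota> f'" for f f'
  proof -
    have "(SIGMA i:UNIV. inv h (f i)) = (SIGMA i:UNIV. inv h (f' i))"
      using that h inj_prod_encode by (simp add: \<iota>_def bij_is_inj inj_eq inj_image_eq_iff)
    then have "inv h (f i) = inv h (f' i)" for i
      by blast
    then show "f = f'"
      using h by (auto simp: bij_imp_bij_inv bij_is_inj inj_eq)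
  qed
  then have "inj \<iota>"
    by (rule injI)
  then show ?thesis
    by blast
qed

section \<open>Provability for r < 1 and r > 1\<close>

lemma subfield_of_reals_of_nat: "subfield_of_reals F \<Longrightarrow> real n \<in> F"
  by (induction n) (auto simp: subfield_of_reals_def)

lemma subfield_of_reals_divide: "subfield_of_reals F \<Longrightarrow> x \<in> F \<Longrightarrow> y \<in> F \<Longrightarrow> x / y \<in> F"
  by (cases "y = 0") (auto simp: subfield_of_reals_def divide_inverse)

lemma subfield_of_reals_of_nat_divide: "subfield_of_reals F \<Longrightarrow> real m / real n \<in> F"
  by (simp add: subfield_of_reals_divide subfield_of_reals_of_nat)

lemma subfield_of_reals_2: "subfield_of_reals F \<Longrightarrow> 2 \<in> F"
  using subfield_of_reals_of_nat[of F 2] by simp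

definition struct_le :: "'a struct \<Rightarrow> 'a \<Rightarrow> 'a \<Rightarrow> bool" where
  "struct_le M x y \<longleftrightarrow> less M x y \<or> x = y"

definition struct_const :: "'a struct \<Rightarrow> real \<Rightarrow> 'a" where
  "struct_const M c = scal M c (one M)"

text \<open>With \<open>y = x \<times> x\<close> this is the value of \<open>poly_tm x\<close>; keeping the square a separate
  argument lets sentences of the additive language speak about it.\<close>
definition poly_val :: "'a struct \<Rightarrow> 'a \<Rightarrow> 'a \<Rightarrow> 'a" where
  "poly_val M x y = plus M (minus M y (scal M 2 x)) (one M)"

lemma sat_le_fm [simp]: "sat M e (le_fm s t) \<longleftrightarrow> struct_le M (tm_eval M e s) (tm_eval M e t)"
  by (simp add: le_fm_def struct_le_def)

lemma le_fm_simps [simp]: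
  "fm_in L F (le_fm s t) \<longleftrightarrow> tm_in L F s \<and> tm_in L F t"
  "free_vars (le_fm s t) = tm_vars s \<union> tm_vars t"
  by (simp_all add: le_fm_def)

lemma cst_simps [simp]: "tm_in L F (cst c) \<longleftrightarrow> c \<in> F" "tm_vars (cst c) = {}"
  by (simp_all add: cst_def)

lemma tm_eval_cst [simp]: "tm_eval M e (cst c) = struct_const M c"
  by (simp add: cst_def struct_const_def)

lemma tm_eval_poly_tm [simp]:
  "tm_eval M e (poly_tm t) = poly_val M (tm_eval M e t) (times M (tm_eval M e t) (tm_eval M e t))"
  by (simp add: poly_tm_def poly_val_def)

lemma Rstruct_simps [simp]:
  "carrier Rstruct = UNIV" "zero Rstruct = 0" "one Rstruct = 1"
  "plus Rstruct = (+)" "minus Rstruct = (-)" "times Rstruct = (*)" "divide Rstruct = (/)"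
  "scal Rstruct = (*)" "less Rstruct = (<)"
  by (simp_all add: Rstruct_def)

lemma Rstruct_derived_simps [simp]:
  "struct_le Rstruct x y \<longleftrightarrow> x \<le> y" "struct_const Rstruct c = c" "poly_val Rstruct x y = y - 2 * x + 1"
  by (auto simp: struct_le_def struct_const_def poly_val_def)

lemma in_T_addI: "sentence_in LAdd F q \<Longrightarrow> holds Rstruct q \<Longrightarrow> q \<in> T F"
  by (simp add: T_def T_add_def)

lemma in_T_multI: "sentence_in LMult F q \<Longrightarrow> holds Rstruct q \<Longrightarrow> q \<in> T F"
  by (simp add: T_def T_mult_def)

lemma model_sat: "model F M \<Longrightarrow> q \<in> T F \<Longrightarrow> sat M (\<lambda>_. zero M) q"
  by (auto simp: model_def holds_def is_struct_def)

lemma sat_phi_le: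
  "sat M e (phi_le r) \<longleftrightarrow>
     (\<forall>x\<in>carrier M. struct_le M x (struct_const M r) \<longrightarrow> struct_le M (zero M) (poly_val M x (times M x x)))"
  by (simp add: phi_le_def)

lemma sat_phi_ge:
  "sat M e (phi_ge r) \<longleftrightarrow>
     (\<forall>x\<in>carrier M. struct_le M (struct_const M r) x \<longrightarrow> struct_le M (zero M) (poly_val M x (times M x x)))"
  by (simp add: phi_ge_def)

context
  fixes F and M :: "'a struct"
  assumes F: "subfield_of_reals F" and M: "model F M"
begin

lemma times_in_carrier: "x \<in> carrier M \<Longrightarrow> times M x x \<in> carrier M"
  using M by (simp add: model_def is_struct_def)

lemma poly_nonneg_nonpos:
  assumes x: "x \<in> carrier M" and "struct_le M x (struct_const M 0)"
  shows "struct_le M (zero M) (poly_val M x (times M x x))"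
proof -
  let ?sq = "All 0 (Imp (le_fm (Var 0) (cst 0)) (le_fm Zero (Mul (Var 0) (Var 0))))"
  let ?lin = "All 0 (All 1 (Imp (Conj (le_fm (Var 0) (cst 0)) (le_fm Zero (Var 1)))
                               (le_fm Zero (Add (Sub (Var 1) (Sc 2 (Var 0))) tm.One))))"
  have "?sq \<in> T F"
    using F by (intro in_T_multI)
      (auto simp: sentence_in_def holds_def subfield_of_reals_def zero_less_mult_iff)
  then have "\<forall>a\<in>carrier M. struct_le M a (struct_const M 0) \<longrightarrow> struct_le M (zero M) (times M a a)"
    using model_sat[OF M] by fastforce
  moreover have "?lin \<in> T F"
    using F by (intro in_T_addI)
      (auto simp: sentence_in_def holds_def subfield_of_reals_def subfield_of_reals_2)
  then have "\<forall>a\<in>carrier M. \<forall>b\<in>carrier M. struct_le M a (struct_const M 0) \<and> struct_le M (zero M) b \<longrightarrow>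
      struct_le M (zero M) (poly_val M a b)"
    using model_sat[OF M] by (fastforce simp: poly_val_def)
  ultimately show ?thesis
    using assms times_in_carrier[OF x] by blast
qed

lemma scal_le_square:
  assumes "c \<in> F" "0 \<le> c" "x \<in> carrier M" "struct_le M (struct_const M c) x"
  shows "struct_le M (scal M c x) (times M x x)"
proof -
  let ?q = "All 0 (Imp (le_fm (cst c) (Var 0)) (le_fm (Sc c (Var 0)) (Mul (Var 0) (Var 0))))"
  have "?q \<in> T F"
    using assms(1,2) by (intro in_T_multI)
      (auto simp: sentence_in_def holds_def intro: mult_right_mono)
  then show ?thesis
    using model_sat[OF M] assms(3,4) by fastforce
qed

lemma poly_nonneg_step:
  assumes c: "c \<in> F" "0 \<le> c" "c < 2" and x: "x \<in> carrier M"
    and "struct_le M (struct_const M c) x" "struct_le M x (struct_const M (1 / (2 - c)))"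
  shows "struct_le M (zero M) (poly_val M x (times M x x))"
proof -
  define d where "d = 1 / (2 - c)"
  have "0 \<le> y - 2 * x + 1" if "x \<le> d" "c * x \<le> y" for x y :: real
  proof -
    have "(2 - c) * x \<le> (2 - c) * d"
      using c that by (intro mult_left_mono) auto
    then show ?thesis
      using c that by (simp add: d_def algebra_simps)
  qed
  moreover have "d \<in> F"
    using F c by (simp add: d_def subfield_of_reals_divide subfield_of_reals_def subfield_of_reals_2)
  ultimately have "All 0 (All 1 (Imp (Conj (Conj (le_fm (cst c) (Var 0)) (le_fm (Var 0) (cst d)))
                                          (le_fm (Sc c (Var 0)) (Var 1)))
                                    (le_fm Zero (Add (Sub (Var 1) (Sc 2 (Var 0))) tm.One)))) \<in> T F"
    using F c by (intro in_T_addI)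
      (auto simp: sentence_in_def holds_def subfield_of_reals_2)
  then have "\<forall>a\<in>carrier M. \<forall>b\<in>carrier M.
      struct_le M (struct_const M c) a \<and> struct_le M a (struct_const M d) \<and> struct_le M (scal M c a) b \<longrightarrow>
      struct_le M (zero M) (poly_val M a b)"
    using model_sat[OF M] by (fastforce simp: poly_val_def)
  then show ?thesis
    using assms scal_le_square[OF c(1,2) x] times_in_carrier[OF x] by (simp add: d_def)
qed

lemma poly_nonneg_ge_2:
  assumes x: "x \<in> carrier M" and "struct_le M (struct_const M 2) x"
  shows "struct_le M (zero M) (poly_val M x (times M x x))"
proof -
  have "All 0 (All 1 (Imp (Conj (le_fm (cst 2) (Var 0)) (le_fm (Sc 2 (Var 0)) (Var 1)))
                          (le_fm Zero (Add (Sub (Var 1) (Sc 2 (Var 0))) tm.One)))) \<in> T F"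
    using F by (intro in_T_addI)
      (auto simp: sentence_in_def holds_def subfield_of_reals_2)
  then have "\<forall>a\<in>carrier M. \<forall>b\<in>carrier M.
      struct_le M (struct_const M 2) a \<and> struct_le M (scal M 2 a) b \<longrightarrow> struct_le M (zero M) (poly_val M a b)"
    using model_sat[OF M] by (fastforce simp: poly_val_def)
  then show ?thesis
    using assms scal_le_square[of 2 x] times_in_carrier[OF x] F by (simp add: subfield_of_reals_2)
qed

lemma le_const_split:
  assumes "a \<in> F" "b \<in> F" "a \<le> b" "x \<in> carrier M"
  shows "struct_le M x (struct_const M b) \<longleftrightarrow>
    struct_le M x (struct_const M a) \<or> struct_le M (struct_const M a) x \<and> struct_le M x (struct_const M b)"
proof -
  let ?P = "le_fm (Var 0) (cst b)"
  let ?Q = "Disj (le_fm (Var 0) (cst a)) (Conj (le_fm (cst a) (Var 0)) (le_fm (Var 0) (cst b)))"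
  have "All 0 (Conj (Imp ?P ?Q) (Imp ?Q ?P)) \<in> T F"
    using assms by (intro in_T_addI) (auto simp: sentence_in_def holds_def)
  then show ?thesis
    using model_sat[OF M] assms(4) by fastforce
qed

lemma const_le_split:
  assumes "a \<in> F" "b \<in> F" "a \<le> b" "x \<in> carrier M"
  shows "struct_le M (struct_const M a) x \<longleftrightarrow>
    struct_le M (struct_const M b) x \<or> struct_le M (struct_const M a) x \<and> struct_le M x (struct_const M b)"
proof -
  let ?P = "le_fm (cst a) (Var 0)"
  let ?Q = "Disj (le_fm (cst b) (Var 0)) (Conj (le_fm (cst a) (Var 0)) (le_fm (Var 0) (cst b)))"
  have "All 0 (Conj (Imp ?P ?Q) (Imp ?Q ?P)) \<in> T F"
    using assms by (intro in_T_addI) (auto simp: sentence_in_def holds_def)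
  then show ?thesis
    using model_sat[OF M] assms(4) by fastforce
qed

lemma poly_nonneg_below:
  "x \<in> carrier M \<Longrightarrow> struct_le M x (struct_const M (real k / (real k + 1))) \<Longrightarrow>
    struct_le M (zero M) (poly_val M x (times M x x))"
proof (induction k)
  case 0
  then show ?case
    by (simp add: poly_nonneg_nonpos)
next
  case (Suc k)
  define c where "c = real k / (real k + 1)"
  have d: "1 / (2 - c) = real (Suc k) / (real (Suc k) + 1)"
    by (simp add: c_def field_simps)
  have c: "c \<in> F" "0 \<le> c" "c < 2" "c \<le> 1 / (2 - c)"
    using subfield_of_reals_of_nat_divide[OF F, of k "k + 1"]
    by (simp_all add: d c_def add.commute field_simps)
  have "1 / (2 - c) \<in> F"
    using F c by (simp add: subfield_of_reals_divide subfield_of_reals_def subfield_of_reals_2)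
  moreover have "struct_le M x (struct_const M (1 / (2 - c)))"
    using Suc.prems(2) by (simp add: d)
  ultimately show ?case
    using le_const_split[OF c(1) _ c(4) Suc.prems(1)] Suc.IH[folded c_def, OF Suc.prems(1)]
      poly_nonneg_step[OF c(1-3) Suc.prems(1)] by blast
qed

lemma poly_nonneg_above:
  "x \<in> carrier M \<Longrightarrow> struct_le M (struct_const M ((real k + 2) / (real k + 1))) x \<Longrightarrow>
    struct_le M (zero M) (poly_val M x (times M x x))"
proof (induction k)
  case 0
  then show ?case
    by (simp add: poly_nonneg_ge_2)
next
  case (Suc k)
  define c where "c = (real (Suc k) + 2) / (real (Suc k) + 1)"
  have d: "1 / (2 - c) = (real k + 2) / (real k + 1)"
    by (simp add: c_def field_simps)
  have c: "c \<in> F" "0 \<le> c" "c < 2" "c \<le> 1 / (2 - c)"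
    using subfield_of_reals_of_nat_divide[OF F, of "k + 3" "k + 2"]
    by (simp_all add: d c_def add.commute field_simps)
  have "1 / (2 - c) \<in> F"
    using F c by (simp add: subfield_of_reals_divide subfield_of_reals_def subfield_of_reals_2)
  moreover have "struct_le M (struct_const M c) x"
    using Suc.prems(2) by (simp add: c_def)
  ultimately show ?case
    using const_le_split[OF c(1) _ c(4) Suc.prems(1)] Suc.IH[OF Suc.prems(1)]
      poly_nonneg_step[OF c(1-3) Suc.prems(1)] by (auto simp: d)
qed

lemma holds_phi_le:
  assumes r: "r \<in> F" "r < 1"
  shows "holds M (phi_le r)"
proof -
  obtain k :: nat where "r / (1 - r) \<le> real k"
    using real_arch_simple by blast
  then have rk: "r \<le> real k / (real k + 1)"
    using r by (simp add: field_simps)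
  have "real k / (real k + 1) \<in> F"
    using subfield_of_reals_of_nat_divide[OF F, of k "k + 1"] by (simp add: add.commute)
  with r rk have "struct_le M x (struct_const M (real k / (real k + 1)))"
    if "x \<in> carrier M" "struct_le M x (struct_const M r)" for x
    using le_const_split that by blast
  then show ?thesis
    by (auto simp: holds_def sat_phi_le intro: poly_nonneg_below)
qed

lemma holds_phi_ge:
  assumes r: "r \<in> F" "1 < r"
  shows "holds M (phi_ge r)"
proof -
  obtain k :: nat where "1 / (r - 1) \<le> real k"
    using real_arch_simple by blast
  then have rk: "(real k + 2) / (real k + 1) \<le> r"
    using r by (simp add: field_simps)
  have "(real k + 2) / (real k + 1) \<in> F"
    using subfield_of_reals_of_nat_divide[OF F, of "k + 2" "k + 1"] by (simp add: add.commute)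
  with r rk have "struct_le M (struct_const M ((real k + 2) / (real k + 1))) x"
    if "x \<in> carrier M" "struct_le M (struct_const M r) x" for x
    using const_le_split that by blast
  then show ?thesis
    by (auto simp: holds_def sat_phi_ge intro: poly_nonneg_above)
qed

end

section \<open>The ultrapower of the reals\<close>

definition free_filter_sets :: "nat set set \<Rightarrow> bool" where
  "free_filter_sets \<U> \<longleftrightarrow> {} \<notin> \<U> \<and> (\<forall>A\<in>\<U>. \<forall>B\<in>\<U>. A \<inter> B \<in> \<U>) \<and>
     (\<forall>A\<in>\<U>. \<forall>B. A \<subseteq> B \<longrightarrow> B \<in> \<U>) \<and> {A. finite (- A)} \<subseteq> \<U>"

lemma ex_maximal_free_filter_sets:
  "\<exists>\<U>. free_filter_sets \<U> \<and> (\<forall>\<V>. free_filter_sets \<V> \<longrightarrow> \<U> \<subseteq> \<V> \<longrightarrow> \<V> = \<U>)"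
proof -
  have "finite (- B)" if "A \<subseteq> B" "finite (- A)" for A B :: "nat set"
    using that by (meson Compl_anti_mono finite_subset)
  then have "free_filter_sets {A. finite (- A)}"
    by (simp add: free_filter_sets_def)
  moreover have "free_filter_sets (\<Union>\<C>)"
    if "\<C> \<noteq> {}" and chain: "subset.chain (Collect free_filter_sets) \<C>" for \<C>
  proof -
    have \<C>: "\<And>\<U>. \<U> \<in> \<C> \<Longrightarrow> free_filter_sets \<U>"
      "\<And>\<U> \<V>. \<U> \<in> \<C> \<Longrightarrow> \<V> \<in> \<C> \<Longrightarrow> \<U> \<subseteq> \<V> \<or> \<V> \<subseteq> \<U>"
      using chain by (auto simp: subset_chain_def)
    have "A \<inter> B \<in> \<Union>\<C>" if AB: "A \<in> \<U>" "B \<in> \<V>" "\<U> \<in> \<C>" "\<V> \<in> \<C>" for A B \<U> \<V>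
    proof -
      obtain \<W> where "\<W> \<in> \<C>" "A \<in> \<W>" "B \<in> \<W>"
        using \<C>(2)[of \<U> \<V>] AB by blast
      then show ?thesis
        using \<C>(1)[of \<W>] by (auto simp: free_filter_sets_def)
    qed
    then have "\<forall>A\<in>\<Union>\<C>. \<forall>B\<in>\<Union>\<C>. A \<inter> B \<in> \<Union>\<C>"
      by blast
    moreover have "{} \<notin> \<Union>\<C>" "\<forall>A\<in>\<Union>\<C>. \<forall>B. A \<subseteq> B \<longrightarrow> B \<in> \<Union>\<C>"
      using \<C>(1) by (auto simp: free_filter_sets_def)
    moreover obtain \<U> where "\<U> \<in> \<C>"
      using \<open>\<C> \<noteq> {}\<close> by blast
    then have "{A. finite (- A)} \<subseteq> \<Union>\<C>"
      using \<C>(1) by (auto simp: free_filter_sets_def)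
    ultimately show ?thesis
      by (simp add: free_filter_sets_def)
  qed
  ultimately show ?thesis
    using subset_Zorn_nonempty[of "Collect free_filter_sets"] by blast
qed

lemma maximal_free_filter_sets_ultra:
  assumes \<U>: "free_filter_sets \<U>" and max: "\<And>\<V>. free_filter_sets \<V> \<Longrightarrow> \<U> \<subseteq> \<V> \<Longrightarrow> \<V> = \<U>"
  shows "A \<in> \<U> \<or> - A \<in> \<U>"
proof (rule ccontr)
  assume neither: "\<not> (A \<in> \<U> \<or> - A \<in> \<U>)"
  define \<V> where "\<V> = {B. \<exists>U\<in>\<U>. U \<inter> A \<subseteq> B}"
  have "{} \<notin> \<V>"
  proof
    assume "{} \<in> \<V>"
    then obtain U where "U \<in> \<U>" "U \<subseteq> - A"
      by (auto simp: \<V>_def)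
    then show False
      using \<U> neither by (simp add: free_filter_sets_def)
  qed
  moreover have "B1 \<inter> B2 \<in> \<V>" if B: "B1 \<in> \<V>" "B2 \<in> \<V>" for B1 B2
  proof -
    obtain U1 U2 where "U1 \<in> \<U>" "U1 \<inter> A \<subseteq> B1" "U2 \<in> \<U>" "U2 \<inter> A \<subseteq> B2"
      using B unfolding \<V>_def by blast
    moreover have "U1 \<inter> U2 \<in> \<U>"
      using \<U> calculation by (simp add: free_filter_sets_def)
    ultimately show ?thesis
      unfolding \<V>_def by blast
  qed
  moreover have "C \<in> \<V>" if "B \<in> \<V>" "B \<subseteq> C" for B C
    using that unfolding \<V>_def by blast
  moreover have "\<U> \<subseteq> \<V>"
    by (auto simp: \<V>_def)
  moreover have "{A. finite (- A)} \<subseteq> \<U>"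
    using \<U> by (simp add: free_filter_sets_def)
  ultimately have "free_filter_sets \<V>"
    unfolding free_filter_sets_def by (intro conjI ballI allI impI) auto
  then have "\<V> = \<U>"
    using max \<open>\<U> \<subseteq> \<V>\<close> by blast
  moreover have "UNIV \<in> \<U>"
    using \<U> by (auto simp: free_filter_sets_def)
  then have "A \<in> \<V>"
    by (auto simp: \<V>_def)
  ultimately show False
    using neither by simp
qed

lemma ex_free_ultrafilter:
  "\<exists>U :: nat filter. U \<noteq> bot \<and> U \<le> sequentially \<and> (\<forall>P. eventually P U \<or> eventually (\<lambda>n. \<not> P n) U)"
proof -
  obtain \<U> where \<U>: "free_filter_sets \<U>"
    and max: "\<And>\<V>. free_filter_sets \<V> \<Longrightarrow> \<U> \<subseteq> \<V> \<Longrightarrow> \<V> = \<U>"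
    using ex_maximal_free_filter_sets by blast
  have "is_filter (\<lambda>P. {n. P n} \<in> \<U>)"
  proof
    show "{n. True} \<in> \<U>"
      using \<U> by (auto simp: free_filter_sets_def)
    show "{n. P n \<and> Q n} \<in> \<U>" if "{n. P n} \<in> \<U>" "{n. Q n} \<in> \<U>" for P Q
      using \<U> that by (simp add: free_filter_sets_def Collect_conj_eq)
    show "{n. Q n} \<in> \<U>" if PQ: "\<forall>n. P n \<longrightarrow> Q n" and P: "{n. P n} \<in> \<U>" for P Q
    proof -
      have "{n. P n} \<subseteq> {n. Q n}"
        using PQ by blast
      with \<U> P show ?thesis
        by (simp add: free_filter_sets_def)
    qed
  qed
  then have ev: "eventually P (Abs_filter (\<lambda>P. {n. P n} \<in> \<U>)) \<longleftrightarrow> {n. P n} \<in> \<U>" for P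
    by (simp add: eventually_Abs_filter)
  have "finite (- {n. P n})" if "eventually P sequentially" for P
    using that by (simp add: Collect_neg_eq [symmetric] eventually_cofinite flip: cofinite_eq_sequentially)
  moreover have "{A. finite (- A)} \<subseteq> \<U>"
    using \<U> by (simp add: free_filter_sets_def)
  ultimately have "Abs_filter (\<lambda>P. {n. P n} \<in> \<U>) \<le> sequentially"
    by (intro filter_leI) (auto simp: ev)
  moreover have "Abs_filter (\<lambda>P. {n. P n} \<in> \<U>) \<noteq> bot"
    using \<U> by (simp add: trivial_limit_def ev free_filter_sets_def)
  moreover have "eventually P (Abs_filter (\<lambda>P. {n. P n} \<in> \<U>)) \<or>
      eventually (\<lambda>n. \<not> P n) (Abs_filter (\<lambda>P. {n. P n} \<in> \<U>))" for P
    using maximal_free_filter_sets_ultra[OF \<U> max, of "{n. P n}"] by (simp add: ev Collect_neg_eq)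
  ultimately show ?thesis
    by blast
qed

definition UF :: "nat filter" where
  "UF = (SOME U. U \<noteq> bot \<and> U \<le> sequentially \<and> (\<forall>P. eventually P U \<or> eventually (\<lambda>n. \<not> P n) U))"

lemma UF_proper: "UF \<noteq> bot"
  and UF_le_sequentially: "UF \<le> sequentially"
  and UF_ultra: "eventually P UF \<or> eventually (\<lambda>n. \<not> P n) UF"
  using someI_ex[OF ex_free_ultrafilter] by (simp_all add: UF_def [symmetric])

lemma frequently_UF_iff: "frequently P UF \<longleftrightarrow> eventually P UF"
  using UF_ultra[of P] eventually_frequently[OF UF_proper, of P] by (auto simp: frequently_def)

lemma eventually_UF_not: "eventually (\<lambda>n. \<not> P n) UF \<longleftrightarrow> \<not> eventually P UF"
  using frequently_UF_iff[of "\<lambda>n. \<not> P n"] by (simp add: not_eventually)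

lemma eventually_UF_disj: "eventually (\<lambda>n. P n \<or> Q n) UF \<longleftrightarrow> eventually P UF \<or> eventually Q UF"
  using frequently_disj_iff[where F = UF] by (simp add: frequently_UF_iff)

lemma eventually_UF_imp: "eventually (\<lambda>n. P n \<longrightarrow> Q n) UF \<longleftrightarrow> (eventually P UF \<longrightarrow> eventually Q UF)"
  using frequently_imp_iff[where F = UF] by (simp add: frequently_UF_iff)

lemma eventually_UF_all: "eventually (\<lambda>n. \<forall>c. P n c) UF \<longleftrightarrow> (\<forall>a. eventually (\<lambda>n. P n (a n)) UF)"
  using frequently_all[where F = UF] by (simp add: frequently_UF_iff)

definition ueq :: "(nat \<Rightarrow> real) \<Rightarrow> (nat \<Rightarrow> real) \<Rightarrow> bool" where
  "ueq f g \<longleftrightarrow> eventually (\<lambda>n. f n = g n) UF"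

lemma ueq_refl [simp]: "ueq f f"
  by (simp add: ueq_def)

lemma ueq_sym: "ueq f g \<Longrightarrow> ueq g f"
  by (simp add: ueq_def eq_commute)

lemma ueq_trans: "ueq f g \<Longrightarrow> ueq g h \<Longrightarrow> ueq f h"
  unfolding ueq_def by (auto elim: eventually_elim2)

lemma eventually_ueq_cong:
  "ueq f f' \<Longrightarrow> ueq g g' \<Longrightarrow>
    eventually (\<lambda>n. P n (f n) (g n)) UF \<longleftrightarrow> eventually (\<lambda>n. P n (f' n) (g' n)) UF"
  unfolding ueq_def by (rule eventually_subst) (auto elim: eventually_elim2)

lemma ueq_pointwise: "ueq f f' \<Longrightarrow> ueq g g' \<Longrightarrow> ueq (\<lambda>n. h n (f n) (g n)) (\<lambda>n. h n (f' n) (g' n))"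
  unfolding ueq_def by (auto elim: eventually_elim2)

text \<open>An element of the ultrapower is represented by the canonical member \<open>urep f\<close> of its
  \<open>ueq\<close>-class, so that equality in the structure is equality of functions.\<close>
definition urep :: "(nat \<Rightarrow> real) \<Rightarrow> nat \<Rightarrow> real" where
  "urep f = (SOME g. ueq f g)"

lemma ueq_urep: "ueq (urep f) f"
  using someI[of "ueq f" f] by (simp add: urep_def ueq_sym)

lemma urep_eq_iff: "urep f = urep g \<longleftrightarrow> ueq f g"
proof
  assume "ueq f g"
  then have "ueq f = ueq g"
    by (auto intro: ueq_trans ueq_sym)
  then show "urep f = urep g"
    by (simp add: urep_def)
qed (metis ueq_sym ueq_trans ueq_urep)

lemma urep_idem: "x \<in> range urep \<Longrightarrow> urep x = x"
  by (auto simp: urep_eq_iff ueq_urep)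

lemma eq_iff_ueq: "x \<in> range urep \<Longrightarrow> y \<in> range urep \<Longrightarrow> x = y \<longleftrightarrow> ueq x y"
  by (metis urep_eq_iff urep_idem)

definition ultrapower :: "(nat \<Rightarrow> real) struct" where
  "ultrapower = \<lparr>carrier = range urep, zero = urep (\<lambda>n. 0), one = urep (\<lambda>n. 1),
     plus = \<lambda>x y. urep (\<lambda>n. x n + y n), minus = \<lambda>x y. urep (\<lambda>n. x n - y n),
     times = \<lambda>x y. urep (\<lambda>n. x n * y n), divide = \<lambda>x y. urep (\<lambda>n. x n / y n),
     scal = \<lambda>a x. urep (\<lambda>n. a * x n), less = \<lambda>x y. eventually (\<lambda>n. x n < y n) UF\<rparr>"

lemma ultrapower_simps [simp]:
  "carrier ultrapower = range urep" "zero ultrapower = urep (\<lambda>n. 0)" "one ultrapower = urep (\<lambda>n. 1)"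
  "plus ultrapower x y = urep (\<lambda>n. x n + y n)" "minus ultrapower x y = urep (\<lambda>n. x n - y n)"
  "times ultrapower x y = urep (\<lambda>n. x n * y n)" "divide ultrapower x y = urep (\<lambda>n. x n / y n)"
  "scal ultrapower a x = urep (\<lambda>n. a * x n)" "less ultrapower x y \<longleftrightarrow> eventually (\<lambda>n. x n < y n) UF"
  by (simp_all add: ultrapower_def)

lemma is_struct_ultrapower: "is_struct F ultrapower"
  by (auto simp: is_struct_def)

lemma tm_eval_ultrapower: "ueq (tm_eval ultrapower e t) (\<lambda>n. tm_eval Rstruct (\<lambda>v. e v n) t)"
  by (induction t) (auto intro: ueq_trans[OF ueq_urep] ueq_pointwise ueq_urep)

lemma tm_eval_ultrapower_in: "\<forall>v. e v \<in> range urep \<Longrightarrow> tm_eval ultrapower e t \<in> range urep"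
  by (induction t) auto

lemma sat_ultrapower_upd:
  assumes IH: "\<And>e. \<forall>v. e v \<in> range urep \<Longrightarrow>
      sat ultrapower e p \<longleftrightarrow> eventually (\<lambda>n. sat Rstruct (\<lambda>v. e v n) p) UF"
    and e: "\<forall>v. e v \<in> range urep"
  shows "sat ultrapower (e(x := urep a)) p \<longleftrightarrow>
    eventually (\<lambda>n. sat Rstruct ((\<lambda>v. e v n)(x := a n)) p) UF"
proof -
  have upd: "(\<lambda>v. (e(x := urep a)) v n) = (\<lambda>v. e v n)(x := urep a n)" for n
    by auto
  have "\<forall>v. (e(x := urep a)) v \<in> range urep"
    using e by simp
  from IH[OF this]
  have "sat ultrapower (e(x := urep a)) p \<longleftrightarrow>
      eventually (\<lambda>n. sat Rstruct ((\<lambda>v. e v n)(x := urep a n)) p) UF"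
    unfolding upd .
  also have "\<dots> \<longleftrightarrow> eventually (\<lambda>n. sat Rstruct ((\<lambda>v. e v n)(x := a n)) p) UF"
    by (rule eventually_ueq_cong[OF ueq_urep ueq_urep,
          where P = "\<lambda>n b c. sat Rstruct ((\<lambda>v. e v n)(x := b)) p"])
  finally show ?thesis .
qed

lemma sat_ultrapower:
  "\<forall>v. e v \<in> range urep \<Longrightarrow> sat ultrapower e p \<longleftrightarrow> eventually (\<lambda>n. sat Rstruct (\<lambda>v. e v n) p) UF"
proof (induction p arbitrary: e)
  case (Eq s t)
  then show ?case
    using eq_iff_ueq tm_eval_ultrapower_in[OF Eq]
      eventually_ueq_cong[OF tm_eval_ultrapower tm_eval_ultrapower, of "\<lambda>n x y. x = y"]
    by (simp add: ueq_def)
next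
  case (Less s t)
  then show ?case
    using eventually_ueq_cong[OF tm_eval_ultrapower tm_eval_ultrapower, of "\<lambda>n x y. x < y"] by simp
next
  case (All x p)
  then show ?case
    using sat_ultrapower_upd[OF All.IH All.prems] by (simp add: eventually_UF_all)
next
  case (Ex x p)
  then show ?case
    using sat_ultrapower_upd[OF Ex.IH Ex.prems] by (simp add: eventually_ex)
qed (simp_all add: eventually_UF_not eventually_UF_disj eventually_UF_imp eventually_conj_iff UF_proper)

lemma model_ultrapower: "model F ultrapower"
  unfolding model_def
proof (intro conjI ballI is_struct_ultrapower)
  fix q assume "q \<in> T F"
  then have "holds Rstruct q"
    by (auto simp: T_def T_add_def T_mult_def)
  then show "holds ultrapower q"
    by (simp add: holds_def sat_ultrapower)
qed

section \<open>Twisting the monads\<close>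

definition ulim :: "(nat \<Rightarrow> real) \<Rightarrow> ereal" where
  "ulim f = Lim UF (\<lambda>n. ereal (f n))"

lemma tendsto_ulim: "((\<lambda>n. ereal (f n)) \<longlongrightarrow> ulim f) UF"
proof -
  let ?G = "filtermap (\<lambda>n. ereal (f n)) UF"
  have "?G \<noteq> bot"
    by (simp add: filtermap_bot_iff UF_proper)
  then obtain l where l: "inf (nhds l) ?G \<noteq> bot"
    using compact_UNIV[unfolded compact_filter, where 'a = ereal] by auto
  have "eventually (\<lambda>n. ereal (f n) \<in> S) UF" if "open S" "l \<in> S" for S
  proof (rule ccontr)
    assume "\<not> eventually (\<lambda>n. ereal (f n) \<in> S) UF"
    then have "eventually (\<lambda>y. y \<notin> S) ?G"
      by (simp add: eventually_filtermap eventually_UF_not)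
    moreover have "eventually (\<lambda>y. y \<in> S) (nhds l)"
      using that by (rule eventually_nhds_in_open)
    ultimately have "eventually (\<lambda>_. False) (inf (nhds l) ?G)"
      unfolding eventually_inf by blast
    with l show False
      by (simp add: trivial_limit_def)
  qed
  then have "((\<lambda>n. ereal (f n)) \<longlongrightarrow> l) UF"
    by (rule topological_tendstoI)
  then show ?thesis
    by (simp add: ulim_def tendsto_Lim UF_proper)
qed

lemma ulim_eqI: "((\<lambda>n. ereal (f n)) \<longlongrightarrow> l) UF \<Longrightarrow> ulim f = l"
  by (simp add: ulim_def tendsto_Lim UF_proper)

lemma ulim_eq_ereal_iff: "ulim f = ereal s \<longleftrightarrow> (f \<longlongrightarrow> s) UF"
  using tendsto_ulim[of f] ulim_eqI[of f "ereal s"] by auto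

lemma ulim_cong:
  assumes "ueq f g"
  shows "ulim f = ulim g"
proof -
  have "eventually (\<lambda>n. ereal (f n) = ereal (g n)) UF"
    using assms by (auto simp: ueq_def elim: eventually_mono)
  then have "((\<lambda>n. ereal (g n)) \<longlongrightarrow> ulim f) UF"
    using tendsto_ulim[of f] by (simp only: tendsto_cong)
  then show ?thesis
    by (simp add: ulim_eqI)
qed

lemma ulim_const [simp]: "ulim (\<lambda>n. c) = ereal c"
  by (simp add: ulim_eq_ereal_iff)

lemma ulim_scale: "ulim (\<lambda>n. a * f n) = ereal a * ulim f"
  using tendsto_cmult_ereal[OF _ tendsto_ulim, of "ereal a" f] by (intro ulim_eqI) simp

lemma ulim_mono: "eventually (\<lambda>n. f n < g n) UF \<Longrightarrow> ulim f \<le> ulim g"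
  by (rule tendsto_le[OF UF_proper tendsto_ulim tendsto_ulim]) (auto elim: eventually_mono)

lemma eventually_less_if_ulim_less:
  assumes "ulim f < ulim g"
  shows "eventually (\<lambda>n. f n < g n) UF"
proof -
  obtain c where c: "ulim f < c" "c < ulim g"
    using dense[OF assms] by blast
  have "eventually (\<lambda>n. ereal (f n) < c) UF" "eventually (\<lambda>n. c < ereal (g n)) UF"
    using order_tendstoD(2)[OF tendsto_ulim c(1)] order_tendstoD(1)[OF tendsto_ulim c(2)] .
  then show ?thesis
  proof eventually_elim
    case (elim n)
    then have "ereal (f n) < ereal (g n)"
      by (rule less_trans)
    then show ?case
      by simp
  qed
qed

definition appreciable :: "(nat \<Rightarrow> real) \<Rightarrow> bool" where
  "appreciable f \<longleftrightarrow> ulim f \<notin> {0, \<infinity>, -\<infinity>}"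

definition stpart :: "(nat \<Rightarrow> real) \<Rightarrow> real" where
  "stpart f = real_of_ereal (ulim f)"

lemma appreciable_ulim: "appreciable f \<Longrightarrow> ulim f = ereal (stpart f) \<and> stpart f \<noteq> 0"
  unfolding appreciable_def stpart_def by (cases "ulim f") auto

definition admissible :: "(real \<Rightarrow> real) \<Rightarrow> bool" where
  "admissible \<rho> \<longleftrightarrow> strict_mono \<rho> \<and> \<rho> 0 = 0 \<and> isCont \<rho> 0"

definition twist :: "(real \<Rightarrow> real) \<Rightarrow> (nat \<Rightarrow> real) \<Rightarrow> nat \<Rightarrow> real" where
  "twist \<rho> f = (if appreciable f then (\<lambda>n. stpart f * (1 + \<rho> (f n / stpart f - 1))) else f)"

lemma ulim_twist:
  assumes "admissible \<rho>"
  shows "ulim (twist \<rho> f) = ulim f"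
proof (cases "appreciable f")
  case True
  define s where "s = stpart f"
  have "ulim f = ereal s" "s \<noteq> 0"
    using appreciable_ulim[OF True] by (simp_all add: s_def)
  then have "(f \<longlongrightarrow> s) UF" "s \<noteq> 0"
    by (simp_all add: ulim_eq_ereal_iff)
  then have "((\<lambda>n. f n / s - 1) \<longlongrightarrow> 0) UF"
    by (auto intro!: tendsto_eq_intros)
  then have "((\<lambda>n. \<rho> (f n / s - 1)) \<longlongrightarrow> 0) UF"
    using assms isCont_tendsto_compose[of 0 \<rho>] by (auto simp: admissible_def)
  then have "(twist \<rho> f \<longlongrightarrow> s) UF"
    using True by (auto simp: twist_def s_def intro!: tendsto_eq_intros)
  then have "ulim (twist \<rho> f) = ereal s"
    by (simp add: ulim_eq_ereal_iff)
  with \<open>ulim f = ereal s\<close> show ?thesis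
    by simp
qed (simp add: twist_def)

lemma appreciable_twist: "admissible \<rho> \<Longrightarrow> appreciable (twist \<rho> f) \<longleftrightarrow> appreciable f"
  and stpart_twist: "admissible \<rho> \<Longrightarrow> stpart (twist \<rho> f) = stpart f"
  by (simp_all add: appreciable_def stpart_def ulim_twist)

lemma twist_cong:
  assumes "ueq f g"
  shows "ueq (twist \<rho> f) (twist \<rho> g)"
proof -
  have eq: "appreciable f = appreciable g" "stpart f = stpart g"
    using ulim_cong[OF assms] by (simp_all add: appreciable_def stpart_def)
  from assms show ?thesis
    unfolding ueq_def by eventually_elim (simp add: twist_def eq)
qed

lemma twist_inverse:
  assumes \<rho>: "admissible \<rho>" and inv: "\<And>t. \<rho>' (\<rho> t) = t"
  shows "twist \<rho>' (twist \<rho> f) = f"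
proof (cases "appreciable f")
  case True
  define s where "s = stpart f"
  have "s \<noteq> 0"
    using appreciable_ulim[OF True] by (simp add: s_def)
  have "twist \<rho>' (twist \<rho> f) = (\<lambda>n. s * (1 + \<rho>' (twist \<rho> f n / s - 1)))"
    using True by (simp add: twist_def[of \<rho>'] appreciable_twist[OF \<rho>] stpart_twist[OF \<rho>] s_def)
  also have "\<dots> = f"
    using True \<open>s \<noteq> 0\<close> by (simp add: twist_def inv flip: s_def)
  finally show ?thesis .
qed (simp add: twist_def)

lemma twist_scale: "twist \<rho> (\<lambda>n. a * f n) = (\<lambda>n. a * twist \<rho> f n)"
proof (cases "a = 0")
  case True
  then show ?thesis
    by (simp add: twist_def appreciable_def)
next
  case False
  then have "appreciable (\<lambda>n. a * f n) \<longleftrightarrow> appreciable f"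
    by (cases "ulim f") (auto simp: appreciable_def ulim_scale)
  moreover have "stpart (\<lambda>n. a * f n) = a * stpart f"
    by (simp add: stpart_def ulim_scale)
  ultimately show ?thesis
    using False by (auto simp: twist_def)
qed

lemma twist_const: "admissible \<rho> \<Longrightarrow> twist \<rho> (\<lambda>n. c) = (\<lambda>n. c)"
  by (auto simp: twist_def appreciable_def stpart_def admissible_def)

lemma twist_pointwise_mono:
  fixes \<rho> :: "real \<Rightarrow> real"
  assumes "strict_mono \<rho>" "s \<noteq> 0" "a < b"
  shows "s * (1 + \<rho> (a / s - 1)) < s * (1 + \<rho> (b / s - 1))"
proof (cases "s > 0")
  case True
  then have "a / s - 1 < b / s - 1"
    using divide_strict_right_mono[OF assms(3)] by simp
  then have "\<rho> (a / s - 1) < \<rho> (b / s - 1)"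
    by (rule strict_monoD[OF assms(1)])
  then show ?thesis
    using True by simp
next
  case False
  then have "s < 0"
    using assms(2) by simp
  then have "b / s - 1 < a / s - 1"
    using divide_strict_right_mono_neg[OF assms(3)] by simp
  then have "\<rho> (b / s - 1) < \<rho> (a / s - 1)"
    by (rule strict_monoD[OF assms(1)])
  then show ?thesis
    using \<open>s < 0\<close> by (simp add: mult_strict_left_mono_neg)
qed

lemma twist_mono:
  assumes \<rho>: "admissible \<rho>" and fg: "eventually (\<lambda>n. f n < g n) UF"
  shows "eventually (\<lambda>n. twist \<rho> f n < twist \<rho> g n) UF"
proof (cases "ulim f = ulim g")
  case True
  then have "appreciable f = appreciable g" "stpart f = stpart g"
    by (simp_all add: appreciable_def stpart_def)
  moreover have "strict_mono \<rho>"
    using \<rho> by (simp add: admissible_def)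
  ultimately show ?thesis
    using fg appreciable_ulim[of f] by (auto simp: twist_def elim!: eventually_mono intro: twist_pointwise_mono)
next
  case False
  then have "ulim (twist \<rho> f) < ulim (twist \<rho> g)"
    using ulim_mono[OF fg] by (simp add: ulim_twist[OF \<rho>])
  then show ?thesis
    by (rule eventually_less_if_ulim_less)
qed

definition twist_mult :: "('a \<Rightarrow> 'a) \<Rightarrow> ('a \<Rightarrow> 'a) \<Rightarrow> 'a struct \<Rightarrow> 'a struct" where
  "twist_mult \<sigma> \<sigma>' M =
     M\<lparr>times := \<lambda>x y. \<sigma>' (times M (\<sigma> x) (\<sigma> y)), divide := \<lambda>x y. \<sigma>' (divide M (\<sigma> x) (\<sigma> y))\<rparr>"

lemma model_twist_mult:
  assumes M: "model F M"
    and maps: "\<forall>x\<in>carrier M. \<sigma> x \<in> carrier M" "\<forall>x\<in>carrier M. \<sigma>' x \<in> carrier M"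
    and inv: "\<forall>x\<in>carrier M. \<sigma> (\<sigma>' x) = x" "\<forall>x\<in>carrier M. \<sigma>' (\<sigma> x) = x"
    and hom: "\<sigma>' (zero M) = zero M" "\<sigma>' (one M) = one M"
      "\<forall>a\<in>F. \<forall>x\<in>carrier M. \<sigma>' (scal M a x) = scal M a (\<sigma>' x)"
    and mono: "\<forall>x\<in>carrier M. \<forall>y\<in>carrier M. less M (\<sigma>' x) (\<sigma>' y) \<longleftrightarrow> less M x y"
  shows "model F (twist_mult \<sigma> \<sigma>' M)"
proof (rule model_if_reducts_iso[OF M])
  have "is_struct F M"
    using M by (simp add: model_def)
  then show "is_struct F (twist_mult \<sigma> \<sigma>' M)"
    using maps by (auto simp: is_struct_def twist_mult_def)
  show "struct_iso LAdd F M (twist_mult \<sigma> \<sigma>' M) id"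
    by (auto simp: struct_iso_def twist_mult_def)
  have "bij_betw \<sigma>' (carrier M) (carrier M)"
    by (rule bij_betw_byWitness[where f' = \<sigma>]) (use maps inv in auto)
  then show "struct_iso LMult F M (twist_mult \<sigma> \<sigma>' M) \<sigma>'"
    using maps inv hom mono by (auto simp: struct_iso_def twist_mult_def)
qed

definition twist_rep :: "(real \<Rightarrow> real) \<Rightarrow> (nat \<Rightarrow> real) \<Rightarrow> nat \<Rightarrow> real" where
  "twist_rep \<rho> x = urep (twist \<rho> x)"

lemma twist_rep_urep: "twist_rep \<rho> (urep f) = urep (twist \<rho> f)"
  by (simp add: twist_rep_def urep_eq_iff twist_cong ueq_urep)

lemma twist_rep_inverse:
  assumes "admissible \<rho>" "\<And>t. \<rho>' (\<rho> t) = t" "x \<in> range urep"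
  shows "twist_rep \<rho>' (twist_rep \<rho> x) = x"
proof -
  have "twist_rep \<rho>' (twist_rep \<rho> x) = urep (twist \<rho>' (twist \<rho> x))"
    unfolding twist_rep_def[of \<rho> x] by (rule twist_rep_urep)
  also have "\<dots> = x"
    using twist_inverse[OF assms(1,2)] urep_idem[OF assms(3)] by simp
  finally show ?thesis .
qed

lemma twist_rep_scal: "twist_rep \<rho> (urep (\<lambda>n. a * x n)) = urep (\<lambda>n. a * twist_rep \<rho> x n)"
proof -
  have "ueq (twist \<rho> x) (twist_rep \<rho> x)"
    using ueq_sym[OF ueq_urep] by (simp add: twist_rep_def)
  then have "ueq (\<lambda>n. a * twist \<rho> x n) (\<lambda>n. a * twist_rep \<rho> x n)"
    unfolding ueq_def by eventually_elim simp
  then show ?thesis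
    by (simp add: twist_rep_urep twist_scale urep_eq_iff)
qed

lemma eventually_twist_rep_less_iff:
  assumes \<rho>: "admissible \<rho>" "admissible \<rho>'" "\<And>t. \<rho>' (\<rho> t) = t"
  shows "eventually (\<lambda>n. twist_rep \<rho> x n < twist_rep \<rho> y n) UF \<longleftrightarrow> eventually (\<lambda>n. x n < y n) UF"
proof -
  have "eventually (\<lambda>n. twist_rep \<rho> x n < twist_rep \<rho> y n) UF \<longleftrightarrow>
      eventually (\<lambda>n. twist \<rho> x n < twist \<rho> y n) UF"
    unfolding twist_rep_def by (rule eventually_ueq_cong[OF ueq_urep ueq_urep])
  also have "\<dots> \<longleftrightarrow> eventually (\<lambda>n. x n < y n) UF"
  proof
    assume "eventually (\<lambda>n. twist \<rho> x n < twist \<rho> y n) UF"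
    from twist_mono[OF \<rho>(2) this] show "eventually (\<lambda>n. x n < y n) UF"
      by (simp add: twist_inverse[OF \<rho>(1,3)])
  qed (rule twist_mono[OF \<rho>(1)])
  finally show ?thesis .
qed

definition twisted_ultrapower :: "(real \<Rightarrow> real) \<Rightarrow> (real \<Rightarrow> real) \<Rightarrow> (nat \<Rightarrow> real) struct" where
  "twisted_ultrapower \<rho> \<rho>' = twist_mult (twist_rep \<rho>) (twist_rep \<rho>') ultrapower"

lemma model_twisted_ultrapower:
  assumes "admissible \<rho>" "admissible \<rho>'" "\<And>t. \<rho>' (\<rho> t) = t" "\<And>t. \<rho> (\<rho>' t) = t"
  shows "model F (twisted_ultrapower \<rho> \<rho>')"
  unfolding twisted_ultrapower_def
proof (rule model_twist_mult[OF model_ultrapower])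
  show "\<forall>x\<in>carrier ultrapower. twist_rep \<rho> x \<in> carrier ultrapower"
    "\<forall>x\<in>carrier ultrapower. twist_rep \<rho>' x \<in> carrier ultrapower"
    by (simp_all add: twist_rep_def)
  show "\<forall>x\<in>carrier ultrapower. twist_rep \<rho> (twist_rep \<rho>' x) = x"
    "\<forall>x\<in>carrier ultrapower. twist_rep \<rho>' (twist_rep \<rho> x) = x"
    using assms by (simp_all add: twist_rep_inverse)
  show "twist_rep \<rho>' (zero ultrapower) = zero ultrapower" "twist_rep \<rho>' (one ultrapower) = one ultrapower"
    using assms(2) by (simp_all add: twist_rep_urep twist_const)
  show "\<forall>a\<in>F. \<forall>x\<in>carrier ultrapower.
      twist_rep \<rho>' (scal ultrapower a x) = scal ultrapower a (twist_rep \<rho>' x)"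
    by (simp add: twist_rep_scal)
  show "\<forall>x\<in>carrier ultrapower. \<forall>y\<in>carrier ultrapower.
      less ultrapower (twist_rep \<rho>' x) (twist_rep \<rho>' y) \<longleftrightarrow> less ultrapower x y"
    using assms by (simp add: eventually_twist_rep_less_iff)
qed

section \<open>The countermodels\<close>

lemma urep_pointwise1: "urep (\<lambda>n. h (urep f n)) = urep (\<lambda>n. h (f n))"
  using ueq_urep[of f] by (simp add: urep_eq_iff ueq_def eventually_mono)

lemma urep_pointwise2: "urep (\<lambda>n. h (urep f n) (urep g n)) = urep (\<lambda>n. h (f n) (g n))"
  using ueq_pointwise[OF ueq_urep ueq_urep, of "\<lambda>_. h" f g] by (simp add: urep_eq_iff)

lemma tendsto_admissible: "admissible \<rho> \<Longrightarrow> (u \<longlongrightarrow> 0) UF \<Longrightarrow> ((\<lambda>n. \<rho> (u n)) \<longlongrightarrow> 0) UF"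
  using isCont_tendsto_compose[of 0 \<rho> u UF] by (simp add: admissible_def)

lemma twist_one_plus:
  assumes "admissible \<rho>" "(u \<longlongrightarrow> 0) UF"
  shows "twist \<rho> (\<lambda>n. 1 + u n) = (\<lambda>n. 1 + \<rho> (u n))"
proof -
  have "((\<lambda>n. 1 + u n) \<longlongrightarrow> 1) UF"
    using assms(2) by (auto intro: tendsto_eq_intros)
  then have "ulim (\<lambda>n. 1 + u n) = 1"
    by (simp add: ulim_eq_ereal_iff one_ereal_def)
  then show ?thesis
    by (simp add: twist_def appreciable_def stpart_def)
qed

lemma poly_val_twisted_ultrapower:
  assumes \<rho>: "admissible \<rho>" "admissible \<rho>'" and u: "(u \<longlongrightarrow> 0) UF"
  defines "M \<equiv> twisted_ultrapower \<rho> \<rho>'" and "x \<equiv> urep (\<lambda>n. 1 + u n)"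
  shows "poly_val M x (times M x x) = urep (\<lambda>n. \<rho>' ((1 + \<rho> (u n))\<^sup>2 - 1) - 2 * u n)"
proof -
  define v where "v n = (1 + \<rho> (u n))\<^sup>2 - 1" for n
  have "(v \<longlongrightarrow> 0) UF"
    unfolding v_def using tendsto_admissible[OF \<rho>(1) u] by (auto intro!: tendsto_eq_intros)
  have "twist_rep \<rho> x = urep (\<lambda>n. 1 + \<rho> (u n))"
    by (simp add: x_def twist_rep_urep twist_one_plus[OF \<rho>(1) u])
  then have "times M x x = twist_rep \<rho>' (urep (\<lambda>n. 1 + v n))"
    by (simp add: M_def twisted_ultrapower_def twist_mult_def urep_pointwise2 v_def power2_eq_square
      algebra_simps)
  also have "\<dots> = urep (\<lambda>n. 1 + \<rho>' (v n))"
    by (simp add: twist_rep_urep twist_one_plus[OF \<rho>(2) \<open>(v \<longlongrightarrow> 0) UF\<close>])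
  finally show ?thesis
    by (simp add: poly_val_def M_def twisted_ultrapower_def twist_mult_def x_def v_def
      urep_pointwise1 urep_pointwise2 algebra_simps)
qed

lemma poly_val_twisted_ultrapower_not_nonneg:
  assumes \<rho>: "admissible \<rho>" "admissible \<rho>'" and u: "(u \<longlongrightarrow> 0) UF"
    and neg: "eventually (\<lambda>n. \<rho>' ((1 + \<rho> (u n))\<^sup>2 - 1) - 2 * u n < 0) UF"
  defines "M \<equiv> twisted_ultrapower \<rho> \<rho>'" and "x \<equiv> urep (\<lambda>n. 1 + u n)"
  shows "\<not> struct_le M (zero M) (poly_val M x (times M x x))"
proof -
  define V where "V n = \<rho>' ((1 + \<rho> (u n))\<^sup>2 - 1) - 2 * u n" for n
  have "\<not> eventually (\<lambda>n. 0 < V n) UF" "\<not> eventually (\<lambda>n. 0 = V n) UF"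
    using neg by (auto simp: V_def simp flip: eventually_UF_not elim: eventually_mono)
  moreover have "eventually (\<lambda>n. urep (\<lambda>n. 0) n < urep V n) UF \<longleftrightarrow> eventually (\<lambda>n. 0 < V n) UF"
    by (rule eventually_ueq_cong[OF ueq_urep ueq_urep])
  moreover have "poly_val M x (times M x x) = urep V"
    unfolding M_def x_def V_def by (rule poly_val_twisted_ultrapower[OF \<rho> u])
  ultimately show ?thesis
    by (simp add: struct_le_def M_def twisted_ultrapower_def twist_mult_def urep_eq_iff ueq_def)
qed

lemma less_const_twisted_ultrapower:
  "less (twisted_ultrapower \<rho> \<rho>') (urep f) (struct_const (twisted_ultrapower \<rho> \<rho>') r) \<longleftrightarrow>
     eventually (\<lambda>n. f n < r) UF"
  "less (twisted_ultrapower \<rho> \<rho>') (struct_const (twisted_ultrapower \<rho> \<rho>') r) (urep f) \<longleftrightarrow>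
     eventually (\<lambda>n. r < f n) UF"
  using eventually_ueq_cong[OF ueq_urep[of f] ueq_urep[of "\<lambda>n. r"], where P = "\<lambda>n a b. a < b"]
    eventually_ueq_cong[OF ueq_urep[of "\<lambda>n. r"] ueq_urep[of f], where P = "\<lambda>n a b. a < b"]
  by (simp_all add: struct_const_def twisted_ultrapower_def twist_mult_def urep_pointwise1)

lemma not_proves_if_twisted_countermodel:
  assumes "admissible \<rho>" "admissible \<rho>'" "\<And>t. \<rho>' (\<rho> t) = t" "\<And>t. \<rho> (\<rho>' t) = t"
    and "\<not> holds (twisted_ultrapower \<rho> \<rho>') p"
  shows "\<not> proves F p"
proof -
  obtain \<iota> :: "(nat \<Rightarrow> real) \<Rightarrow> real" where "inj \<iota>"
    using inj_seq_to_real by blast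
  then show ?thesis
    using not_proves_if_countermodel[OF model_twisted_ultrapower[OF assms(1-4)]] assms(5)
    by (meson inj_on_subset subset_UNIV)
qed

lemma not_proves_phi_le_if_twisted:
  assumes \<rho>: "admissible \<rho>" "admissible \<rho>'" "\<And>t. \<rho>' (\<rho> t) = t" "\<And>t. \<rho> (\<rho>' t) = t"
    and u: "(u \<longlongrightarrow> 0) UF" "eventually (\<lambda>n. 1 + u n < r) UF"
    and neg: "eventually (\<lambda>n. \<rho>' ((1 + \<rho> (u n))\<^sup>2 - 1) - 2 * u n < 0) UF"
  shows "\<not> proves F (phi_le r)"
proof (rule not_proves_if_twisted_countermodel[OF \<rho>])
  let ?M = "twisted_ultrapower \<rho> \<rho>'" and ?x = "urep (\<lambda>n. 1 + u n)"
  have "?x \<in> carrier ?M"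
    by (simp add: twisted_ultrapower_def twist_mult_def)
  moreover have "struct_le ?M ?x (struct_const ?M r)"
    using u(2) by (simp add: struct_le_def less_const_twisted_ultrapower)
  ultimately have "\<not> sat ?M (\<lambda>_. ?x) (phi_le r)"
    using poly_val_twisted_ultrapower_not_nonneg[OF \<rho>(1,2) u(1) neg] by (auto simp: sat_phi_le)
  then show "\<not> holds ?M (phi_le r)"
    using \<open>?x \<in> carrier ?M\<close> by (auto simp: holds_def)
qed

lemma not_proves_phi_ge_if_twisted:
  assumes \<rho>: "admissible \<rho>" "admissible \<rho>'" "\<And>t. \<rho>' (\<rho> t) = t" "\<And>t. \<rho> (\<rho>' t) = t"
    and u: "(u \<longlongrightarrow> 0) UF" "eventually (\<lambda>n. r < 1 + u n) UF"
    and neg: "eventually (\<lambda>n. \<rho>' ((1 + \<rho> (u n))\<^sup>2 - 1) - 2 * u n < 0) UF"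
  shows "\<not> proves F (phi_ge r)"
proof (rule not_proves_if_twisted_countermodel[OF \<rho>])
  let ?M = "twisted_ultrapower \<rho> \<rho>'" and ?x = "urep (\<lambda>n. 1 + u n)"
  have "?x \<in> carrier ?M"
    by (simp add: twisted_ultrapower_def twist_mult_def)
  moreover have "struct_le ?M (struct_const ?M r) ?x"
    using u(2) by (simp add: struct_le_def less_const_twisted_ultrapower)
  ultimately have "\<not> sat ?M (\<lambda>_. ?x) (phi_ge r)"
    using poly_val_twisted_ultrapower_not_nonneg[OF \<rho>(1,2) u(1) neg] by (auto simp: sat_phi_ge)
  then show "\<not> holds ?M (phi_ge r)"
    using \<open>?x \<in> carrier ?M\<close> by (auto simp: holds_def)
qed

lemma admissible_root3: "admissible (root 3)"
  by (simp add: admissible_def strict_mono_def isCont_real_root)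

lemma root3_cube: "root 3 (t ^ 3) = t" and cube_root3: "(root 3 t) ^ 3 = t"
  by (simp_all add: odd_real_root_power_cancel odd_real_root_pow)

lemma admissible_cube: "admissible (\<lambda>t::real. t ^ 3)"
proof -
  have "strict_mono (\<lambda>t::real. t ^ 3)"
    by (rule strict_monoI) (metis admissible_root3 admissible_def root3_cube strict_mono_less)
  then show ?thesis
    by (simp add: admissible_def)
qed

lemma tendsto_inverse_Suc_UF: "((\<lambda>n. inverse (real (Suc n))) \<longlongrightarrow> 0) UF"
  by (rule tendsto_mono[OF UF_le_sequentially LIMSEQ_inverse_real_of_nat])

lemma root3_twist_value_neg:
  assumes "0 < w" "w \<le> 1 / 2"
  shows "((1 + root 3 (- (w ^ 3)))\<^sup>2 - 1) ^ 3 - 2 * (- (w ^ 3)) < 0"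
proof -
  have "(3 / 2 :: real) ^ 3 \<le> (2 - w) ^ 3"
    using assms by (intro power_mono) auto
  then have "2 < (2 - w) ^ 3"
    by (simp add: power3_eq_cube)
  moreover have "root 3 (- (w ^ 3)) = - w"
    by (simp add: real_root_minus root3_cube)
  then have "((1 + root 3 (- (w ^ 3)))\<^sup>2 - 1) ^ 3 - 2 * (- (w ^ 3)) = w ^ 3 * (2 - (2 - w) ^ 3)"
    by (simp add: power2_eq_square power3_eq_cube algebra_simps)
  ultimately show ?thesis
    using assms by (simp add: mult_pos_neg)
qed

lemma cube_twist_value_neg:
  assumes "0 < w" "w \<le> 1"
  shows "root 3 ((1 + w ^ 3)\<^sup>2 - 1) - 2 * w < 0"
proof -
  have "(1 + w ^ 3)\<^sup>2 - 1 = w ^ 3 * (2 + w ^ 3)"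
    by (simp add: power2_eq_square algebra_simps)
  also have "\<dots> < w ^ 3 * 8"
    using assms power_le_one[of w 3] by (intro mult_strict_left_mono) auto
  also have "\<dots> = (2 * w) ^ 3"
    by (simp add: power_mult_distrib)
  finally show ?thesis
    by (metis diff_less_0_iff_less real_root_less_iff root3_cube zero_less_numeral)
qed

lemma not_proves_phi_le:
  assumes "1 \<le> r"
  shows "\<not> proves F (phi_le r)"
proof (rule not_proves_phi_le_if_twisted[OF admissible_root3 admissible_cube cube_root3 root3_cube])
  define w where "w n = inverse (real (Suc n))" for n
  let ?u = "\<lambda>n. - (w n ^ 3)"
  have "(?u \<longlongrightarrow> - (0 ^ 3)) UF"
    unfolding w_def by (intro tendsto_intros tendsto_inverse_Suc_UF)
  then show "(?u \<longlongrightarrow> 0) UF"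
    by simp
  have "0 < w n ^ 3" for n
    by (simp add: w_def)
  then have "1 + ?u n < r" for n
    using assms \<open>0 < w n ^ 3\<close> by linarith
  then show "eventually (\<lambda>n. 1 + ?u n < r) UF"
    by (simp add: always_eventually)
  have "eventually (\<lambda>n. ((1 + root 3 (?u n))\<^sup>2 - 1) ^ 3 - 2 * ?u n < 0) sequentially"
    unfolding eventually_sequentially
  proof (intro exI allI impI)
    fix n :: nat assume "1 \<le> n"
    then have "0 < w n" "w n \<le> 1 / 2"
      by (auto simp: w_def field_simps)
    then show "((1 + root 3 (?u n))\<^sup>2 - 1) ^ 3 - 2 * ?u n < 0"
      by (rule root3_twist_value_neg)
  qed
  then show "eventually (\<lambda>n. ((1 + root 3 (?u n))\<^sup>2 - 1) ^ 3 - 2 * ?u n < 0) UF"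
    by (rule filter_leD[OF UF_le_sequentially])
qed

lemma not_proves_phi_ge:
  assumes "r \<le> 1"
  shows "\<not> proves F (phi_ge r)"
proof (rule not_proves_phi_ge_if_twisted[OF admissible_cube admissible_root3 root3_cube cube_root3])
  define u where "u n = inverse (real (Suc n))" for n
  show "(u \<longlongrightarrow> 0) UF"
    unfolding u_def by (rule tendsto_inverse_Suc_UF)
  have u: "0 < u n" "u n \<le> 1" for n
    by (auto simp: u_def field_simps)
  then have "r < 1 + u n" for n
    using assms \<open>0 < u n\<close> by linarith
  then show "eventually (\<lambda>n. r < 1 + u n) UF"
    by (simp add: always_eventually)
  show "eventually (\<lambda>n. root 3 ((1 + u n ^ 3)\<^sup>2 - 1) - 2 * u n < 0) UF"
    using u by (intro always_eventually allI cube_twist_value_neg)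
qed

lemma sentence_in_phi:
  assumes "subfield_of_reals F" "r \<in> F"
  shows "sentence_in LBoth F (phi_le r)" "sentence_in LBoth F (phi_ge r)"
  using assms subfield_of_reals_2 by (simp_all add: sentence_in_def phi_le_def phi_ge_def poly_tm_def)

theorem theorem5p3:
  fixes F :: "real set" and r :: real
  assumes "subfield_of_reals F" and "r \<in> F"
  shows "(proves F (phi_le r) \<longleftrightarrow> r < 1) \<and> (proves F (phi_ge r) \<longleftrightarrow> r > 1)"
proof (intro conjI iffI)
  show "r < 1" if "proves F (phi_le r)"
    using that not_proves_phi_le[of r F] by linarith
  show "r > 1" if "proves F (phi_ge r)"
    using that not_proves_phi_ge[of r F] by linarith
  show "proves F (phi_le r)" if "r < 1"
    using sentence_in_phi[OF assms] holds_phi_le[OF assms(1) _ assms(2) that]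
    unfolding proves_def model_def by blast
  show "proves F (phi_ge r)" if "r > 1"
    using sentence_in_phi[OF assms] holds_phi_ge[OF assms(1) _ assms(2) that]
    unfolding proves_def model_def by blast
qed

end
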